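(* Let $a,\epsilon,\kappa\in\mathbb{R}$ and let $p:\mathbb{R}\to\mathbb{R}$ be a $2\pi$-periodic function with zero mean. Consider the damped Hill equation $$\ddot{\theta} + 2\kappa\dot{\theta} + \big(a+\epsilon p(t)\big)\theta = 0,$$ and let $\Theta(t,0)$ denote its $2\times 2$ state transition matrix in the state $(\theta,\dot\theta)^{\mathrm T}$. Define the related undamped Hill equation $$\ddot{z} + \big(a-\kappa^2+\epsilon p(t)\big) z = 0,$$ with $2\times 2$ state transition matrix $\Phi(t,0;a,\epsilon)$ in the state $(z,\dot z)^{\mathrm T}$. If $$\big|\operatorname{tr}\,\Phi(2\pi,0;a,\epsilon)\big| > 2\cosh(2\pi\kappa),$$ then the damped Hill equation is unstable, i.e. its monodromy matrix $\Theta(2\pi,0)$ has an eigenvalue of modulus strictly greater than $1$.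
   Context: For a linear system $\dot x = A(t)x$ with $2\pi$-periodic $A$, the state transition matrix $\Theta(t,0)$ is the matrix solution of $\dot\Theta = A(t)\Theta$, $\Theta(0,0)=I$, so that $x(t)=\Theta(t,0)x(0)$; the monodromy matrix is $\Theta(2\pi,0)$. The system is called unstable when the monodromy matrix has an eigenvalue outside the closed unit disk. Here $\kappa$ is the viscous damping coefficient, $a$ the mean spring constant, and $\epsilon$ the parametric forcing amplitude. *)

theory Defs
  imports "HOL-Analysis.Analysis"
begin

text \<open>Companion (state-space) matrix of x'' + c x' + q(t) x = 0 in the state (x, x').\<close>
definition companion2 :: "real \<Rightarrow> real \<Rightarrow> real^2^2" where
  "companion2 c q = vector [vector [0, 1], vector [- q, - c]]"

definition is_state_transition :: "(real \<Rightarrow> real^2^2) \<Rightarrow> (real \<Rightarrow> real^2^2) \<Rightarrow> bool" where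
  "is_state_transition A Phi \<longleftrightarrow>
     Phi 0 = mat 1 \<and> (\<forall>t. (Phi has_vector_derivative (A t ** Phi t)) (at t))"

definition is_eigenvalue :: "real^'n^'n \<Rightarrow> complex \<Rightarrow> bool" where
  "is_eigenvalue M l \<longleftrightarrow>
     (\<exists>v :: complex^'n. v \<noteq> 0 \<and>
        (\<chi> i. \<Sum>j\<in>UNIV. complex_of_real (M $ i $ j) * v $ j) = l *s v)"

end

theory Submission
  imports Defs
begin

text \<open>Substituting \<open>\<theta>(t) = exp(-\<kappa> t) z(t)\<close> turns the damped equation into the undamped one,
  so \<open>\<Theta>(t) = exp(-\<kappa> t) S \<Phi>(t) S\<inverse>\<close> with the shear \<open>S = [[1,0],[-\<kappa>,1]]\<close>. Hence
  \<open>tr \<Theta>(2\<pi>) = exp(-2\<pi>\<kappa>) tr \<Phi>(2\<pi>)\<close>, while Liouville's formula gives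
  \<open>det \<Theta>(2\<pi>) = exp(-2\<pi>\<kappa>)\<^sup>2\<close>. So \<open>exp(-2\<pi>\<kappa>) \<mu>\<close> is an eigenvalue of \<open>\<Theta>(2\<pi>)\<close> whenever
  \<open>\<mu>\<^sup>2 - tr \<Phi>(2\<pi>) \<mu> + 1 = 0\<close>, and the trace hypothesis puts \<open>exp(2\<pi>\<kappa>)\<close> strictly between
  the two real roots of this equation.
  Liouville's formula and the uniqueness of state transition matrices both come from the
  adjugate: if \<open>X' = A X\<close> and \<open>Y' = A Y\<close>, then \<open>W = adj(X) Y\<close> satisfies \<open>W' = tr(A) W\<close>,
  because \<open>adj(A) + A = tr(A) I\<close> for \<open>2\<times>2\<close> matrices.\<close>

lemma bounded_bilinear_matrix_matrix_mult:
  "bounded_bilinear ((**) :: real^'n^'m \<Rightarrow> real^'p^'n \<Rightarrow> real^'p^'m)"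
  unfolding bilinear_conv_bounded_bilinear[symmetric] bilinear_def linear_iff
  by (simp add: vec_eq_iff matrix_matrix_mult_def sum.distrib distrib_left distrib_right
      sum_distrib_left mult_ac)

lemma has_vector_derivative_matrix_mult:
  fixes X :: "real \<Rightarrow> real^'n^'m" and Y :: "real \<Rightarrow> real^'p^'n"
  assumes "(X has_vector_derivative X') (at t)" and "(Y has_vector_derivative Y') (at t)"
  shows "((\<lambda>t. X t ** Y t) has_vector_derivative (X' ** Y t + X t ** Y')) (at t)"
  using bounded_bilinear.has_vector_derivative[OF bounded_bilinear_matrix_matrix_mult assms]
  by (simp add: add.commute)

lemma mat_matrix_mult: "mat c ** (A :: real^'n^'m) = c *\<^sub>R A"
  by (simp add: vec_eq_iff matrix_matrix_mult_def mat_def if_distrib if_distribR sum.delta'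
      cong: if_cong)

definition adj2 :: "'a::comm_ring_1^2^2 \<Rightarrow> 'a^2^2" where
  "adj2 M = vector [vector [M$2$2, - M$1$2], vector [- M$2$1, M$1$1]]"

lemma adj2_matrix_mult_self: "adj2 M ** M = mat (det M)"
  by (simp add: vec_eq_iff forall_2 adj2_def matrix_matrix_mult_def sum_2 mat_def det_2
      algebra_simps)

lemma matrix_mult_adj2_self: "M ** adj2 M = mat (det M)"
  by (simp add: vec_eq_iff forall_2 adj2_def matrix_matrix_mult_def sum_2 mat_def det_2
      algebra_simps)

lemma adj2_matrix_mult: "adj2 (A ** B) = adj2 B ** adj2 A"
  by (simp add: vec_eq_iff forall_2 adj2_def matrix_matrix_mult_def sum_2 algebra_simps)

lemma adj2_add_self: "adj2 A + A = mat (trace A)"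
  by (simp add: vec_eq_iff forall_2 adj2_def mat_def trace_def sum_2)

lemma adj2_mat: "adj2 (mat c) = mat c"
  by (simp add: vec_eq_iff forall_2 adj2_def mat_def)

lemma bounded_linear_adj2: "bounded_linear (adj2 :: real^2^2 \<Rightarrow> real^2^2)"
  unfolding linear_conv_bounded_linear[symmetric] linear_iff
  by (simp add: vec_eq_iff forall_2 adj2_def)

lemma proportional_derivative_imp_exp_scaleR:
  fixes W :: "real \<Rightarrow> 'a::real_normed_vector"
  assumes W': "\<And>t. (W has_vector_derivative c *\<^sub>R W t) (at t)"
  shows "W t = exp (c * t) *\<^sub>R W 0"
proof -
  have scaled_derivative_zero: "((\<lambda>t. exp (- c * t) *\<^sub>R W t) has_vector_derivative 0) (at s)" for s
  proof -
    have "((\<lambda>t. exp (- c * t)) has_real_derivative - c * exp (- c * s)) (at s)"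
      by (auto intro!: derivative_eq_intros)
    from has_vector_derivative_scaleR[OF this W'] show ?thesis
      by (simp add: mult.commute)
  qed
  obtain w where w: "\<And>t. t \<in> UNIV \<Longrightarrow> exp (- c * t) *\<^sub>R W t = w"
    using has_vector_derivative_zero_constant[OF convex_UNIV] scaled_derivative_zero by blast
  have "W t = exp (c * t) *\<^sub>R (exp (- c * t) *\<^sub>R W t)"
    by (simp flip: exp_add)
  also have "\<dots> = exp (c * t) *\<^sub>R W 0"
    using w[of t] w[of 0] by simp
  finally show ?thesis .
qed

lemma adj2_state_transition_mult_solution:
  assumes X: "is_state_transition A X"
    and Y': "\<And>t. (Y has_vector_derivative A t ** Y t) (at t)"
    and trace_A: "\<And>t. trace (A t) = \<tau>"
  shows "adj2 (X t) ** Y t = exp (\<tau> * t) *\<^sub>R Y 0"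
proof -
  have X0: "X 0 = mat 1" and X': "\<And>s. (X has_vector_derivative A s ** X s) (at s)"
    using X unfolding is_state_transition_def by auto
  have "((\<lambda>t. adj2 (X t) ** Y t) has_vector_derivative \<tau> *\<^sub>R (adj2 (X s) ** Y s)) (at s)" for s
  proof -
    have "adj2 (A s ** X s) ** Y s + adj2 (X s) ** (A s ** Y s)
        = adj2 (X s) ** (adj2 (A s) + A s) ** Y s"
      by (simp add: adj2_matrix_mult matrix_mul_assoc matrix_add_ldistrib
          bounded_bilinear.add_left[OF bounded_bilinear_matrix_matrix_mult])
    also have "\<dots> = \<tau> *\<^sub>R (adj2 (X s) ** Y s)"
      by (simp add: adj2_add_self trace_A matrix_mul_assoc[symmetric] mat_matrix_mult
          matrix_scalar_ac scalar_matrix_assoc)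
    finally have derivative_eq: "adj2 (A s ** X s) ** Y s + adj2 (X s) ** (A s ** Y s)
        = \<tau> *\<^sub>R (adj2 (X s) ** Y s)" .
    from has_vector_derivative_matrix_mult
        [OF bounded_linear.has_vector_derivative[OF bounded_linear_adj2 X'[of s]] Y'[of s]]
    show ?thesis
      unfolding derivative_eq .
  qed
  from proportional_derivative_imp_exp_scaleR[OF this] show ?thesis
    by (simp add: X0 adj2_mat)
qed

lemma det_state_transition:
  assumes "is_state_transition A X" and "\<And>t. trace (A t) = \<tau>"
  shows "det (X t) = exp (\<tau> * t)"
proof -
  have "mat (det (X t)) = exp (\<tau> * t) *\<^sub>R (mat 1 :: real^2^2)"
    using adj2_state_transition_mult_solution[of A X X] assms
    by (simp add: adj2_matrix_mult_self is_state_transition_def)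
  from arg_cong[OF this, of "\<lambda>M. M $ 1 $ 1"] show ?thesis
    by (simp add: mat_def)
qed

lemma state_transition_unique:
  assumes X: "is_state_transition A X" and Y: "is_state_transition A Y"
    and trace_A: "\<And>t. trace (A t) = \<tau>"
  shows "X = Y"
proof
  fix t
  have Y0: "Y 0 = mat 1" and Y': "\<And>t. (Y has_vector_derivative A t ** Y t) (at t)"
    using Y unfolding is_state_transition_def by auto
  have "exp (\<tau> * t) *\<^sub>R Y t = X t ** (adj2 (X t) ** Y t)"
    by (simp add: matrix_mul_assoc matrix_mult_adj2_self mat_matrix_mult
        det_state_transition[OF X trace_A])
  also have "\<dots> = exp (\<tau> * t) *\<^sub>R X t"
    by (simp add: adj2_state_transition_mult_solution[OF X Y' trace_A] Y0 matrix_scalar_ac)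
  finally show "X t = Y t"
    by simp
qed

lemma trace_scaleR: "trace (c *\<^sub>R (M :: real^'n^'n)) = c * trace M"
  by (simp add: trace_def sum_distrib_left)

lemma trace_companion2: "trace (companion2 c q) = - c"
  by (simp add: companion2_def trace_def sum_2)

definition shear :: "real \<Rightarrow> real^2^2" where
  "shear k = vector [vector [1, 0], vector [- k, 1]]"

lemma shear_mult_shear_neg: "shear k ** shear (- k) = mat 1"
  by (simp add: vec_eq_iff forall_2 shear_def matrix_matrix_mult_def sum_2 mat_def)

lemma shear_neg_mult_shear: "shear (- k) ** shear k = mat 1"
  using shear_mult_shear_neg[of "- k"] by simp

lemma trace_shear_conjugate: "trace (shear k ** M ** shear (- k)) = trace M"
  by (metis matrix_mul_assoc matrix_mul_rid shear_neg_mult_shear trace_mul_sym)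

lemma companion2_mult_shear:
  "companion2 (c + 2 * k) q ** shear k = shear k ** companion2 c (q - c * k - k\<^sup>2) - k *\<^sub>R shear k"
  by (simp add: vec_eq_iff forall_2 companion2_def shear_def matrix_matrix_mult_def sum_2
      algebra_simps power2_eq_square)

lemma state_transition_exp_shear:
  assumes Phi: "is_state_transition (\<lambda>t. companion2 c (q t - c * k - k\<^sup>2)) Phi"
  shows "is_state_transition (\<lambda>t. companion2 (c + 2 * k) (q t))
           (\<lambda>t. exp (- k * t) *\<^sub>R (shear k ** Phi t ** shear (- k)))"
  unfolding is_state_transition_def
proof (intro conjI allI)
  have Phi0: "Phi 0 = mat 1" and Phi': "\<And>t. (Phi has_vector_derivative
      companion2 c (q t - c * k - k\<^sup>2) ** Phi t) (at t)"
    using Phi unfolding is_state_transition_def by auto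
  show "exp (- k * 0) *\<^sub>R (shear k ** Phi 0 ** shear (- k)) = mat 1"
    by (simp add: Phi0 shear_mult_shear_neg)
  fix t
  define B where "B = companion2 c (q t - c * k - k\<^sup>2)"
  define E where "E = exp (- k * t)"
  have conjugation_linear: "bounded_linear (\<lambda>M. shear k ** M ** shear (- k))"
    using bounded_linear_compose
        [OF bounded_bilinear.bounded_linear_left bounded_bilinear.bounded_linear_right,
         OF bounded_bilinear_matrix_matrix_mult bounded_bilinear_matrix_matrix_mult] .
  have "((\<lambda>t. exp (- k * t)) has_real_derivative - k * E) (at t)"
    unfolding E_def by (auto intro!: derivative_eq_intros)
  from has_vector_derivative_scaleR
      [OF this bounded_linear.has_vector_derivative[OF conjugation_linear Phi'[of t]]]
  have "((\<lambda>t. exp (- k * t) *\<^sub>R (shear k ** Phi t ** shear (- k))) has_vector_derivative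
      E *\<^sub>R (shear k ** (B ** Phi t) ** shear (- k))
        - (k * E) *\<^sub>R (shear k ** Phi t ** shear (- k))) (at t)"
    by (simp add: E_def B_def)
  also have "E *\<^sub>R (shear k ** (B ** Phi t) ** shear (- k))
        - (k * E) *\<^sub>R (shear k ** Phi t ** shear (- k))
      = E *\<^sub>R ((shear k ** B - k *\<^sub>R shear k) ** Phi t ** shear (- k))"
    by (simp add: matrix_mul_assoc bounded_bilinear.diff_left[OF bounded_bilinear_matrix_matrix_mult]
        scalar_matrix_assoc algebra_simps)
  also have "\<dots> = companion2 (c + 2 * k) (q t) ** (E *\<^sub>R (shear k ** Phi t ** shear (- k)))"
    by (simp add: B_def companion2_mult_shear[symmetric] matrix_mul_assoc matrix_scalar_ac
        scalar_matrix_assoc)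
  finally show "((\<lambda>t. exp (- k * t) *\<^sub>R (shear k ** Phi t ** shear (- k))) has_vector_derivative
      companion2 (c + 2 * k) (q t) ** (exp (- k * t) *\<^sub>R (shear k ** Phi t ** shear (- k)))) (at t)"
    by (simp add: E_def)
qed

lemma singular_matrix_has_kernel_vector:
  fixes N :: "real^2^2"
  assumes "det N = 0"
  obtains v where "v \<noteq> 0" and "N *v v = 0"
proof -
  consider "N$1$2 \<noteq> 0"
    | "N$1$2 = 0" "N$2$1 \<noteq> 0 \<or> N$2$2 \<noteq> 0"
    | "N$1$2 = 0" "N$2$1 = 0" "N$2$2 = 0"
    by blast
  then show ?thesis
  proof cases
    case 1
    then show ?thesis
      using assms by (intro that[of "vector [N$1$2, - N$1$1]"])
        (auto simp: vec_eq_iff forall_2 matrix_vector_mult_def sum_2 det_2 algebra_simps)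
  next
    case 2
    then show ?thesis
      using assms by (intro that[of "vector [N$2$2, - N$2$1]"])
        (auto simp: vec_eq_iff forall_2 matrix_vector_mult_def sum_2 det_2 algebra_simps)
  next
    case 3
    then show ?thesis
      by (intro that[of "vector [0, 1]"])
        (auto simp: vec_eq_iff forall_2 matrix_vector_mult_def sum_2)
  qed
qed

lemma is_eigenvalue_of_characteristic_root:
  fixes M :: "real^2^2"
  assumes "l\<^sup>2 - trace M * l + det M = 0"
  shows "is_eigenvalue M (complex_of_real l)"
proof -
  have "det (M - l *\<^sub>R mat 1) = l\<^sup>2 - trace M * l + det M"
    by (simp add: det_2 trace_def sum_2 mat_def algebra_simps power2_eq_square)
  then obtain v where "v \<noteq> 0" and "(M - l *\<^sub>R mat 1) *v v = 0"
    using assms singular_matrix_has_kernel_vector by metis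
  then have Mv: "\<forall>i. (\<Sum>j\<in>UNIV. M $ i $ j * v $ j) = l * v $ i"
    by (auto simp: vec_eq_iff forall_2 matrix_vector_mult_def sum_2 mat_def algebra_simps)
  let ?w = "\<chi> i. complex_of_real (v $ i)"
  have "?w \<noteq> 0"
    using \<open>v \<noteq> 0\<close> by (simp add: vec_eq_iff)
  moreover have "(\<chi> i. \<Sum>j\<in>UNIV. complex_of_real (M $ i $ j) * ?w $ j)
      = complex_of_real l *s ?w"
    by (simp add: vec_eq_iff Mv flip: of_real_mult of_real_sum)
  ultimately show ?thesis
    unfolding is_eigenvalue_def by blast
qed

lemma reciprocal_quadratic_root_abs_gt_exp:
  fixes s C :: real
  assumes "\<bar>s\<bar> > 2 * cosh C"
  shows "\<exists>\<mu>. \<mu>\<^sup>2 - s * \<mu> + 1 = 0 \<and> exp C < \<bar>\<mu>\<bar>"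
proof -
  define m where "m = exp C"
  have "2 \<le> 2 * cosh C"
    using cosh_real_ge_1[of C] by simp
  then have "4 \<le> s\<^sup>2"
    using assms abs_le_square_iff[of 2 s] by simp
  define D where "D = sqrt (s\<^sup>2 - 4)"
  have "D\<^sup>2 = s\<^sup>2 - 4" and "0 \<le> D"
    using \<open>4 \<le> s\<^sup>2\<close> by (simp_all add: D_def)
  define r where "r = (\<bar>s\<bar> + D) / 2"
  define r' where "r' = (\<bar>s\<bar> - D) / 2"
  have factor: "x\<^sup>2 - \<bar>s\<bar> * x + 1 = (x - r) * (x - r')" for x
    using \<open>D\<^sup>2 = s\<^sup>2 - 4\<close> by (simp add: r_def r'_def field_simps power2_eq_square)
  have "m\<^sup>2 - \<bar>s\<bar> * m + 1 < 0"
    using assms by (simp add: m_def cosh_def exp_minus field_simps power2_eq_square)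
  moreover have "r' \<le> r"
    using \<open>0 \<le> D\<close> by (simp add: r_def r'_def)
  ultimately have "m < r"
    unfolding factor by (smt (verit) mult_nonneg_nonneg)
  moreover have "r\<^sup>2 - \<bar>s\<bar> * r + 1 = 0"
    unfolding factor by simp
  ultimately show ?thesis
    unfolding m_def by (intro exI[of _ "if 0 \<le> s then r else - r"]) (auto simp: abs_if)
qed

theorem theorem3p1:
  fixes a \<epsilon> \<kappa> :: real and p :: "real \<Rightarrow> real"
    and Theta Phi :: "real \<Rightarrow> real^2^2"
  assumes p_cont: "continuous_on UNIV p"
    and p_per: "\<forall>t. p (t + 2 * pi) = p t"
    and p_mean: "integral {0..2 * pi} p = 0"
    and Theta: "is_state_transition (\<lambda>t. companion2 (2 * \<kappa>) (a + \<epsilon> * p t)) Theta"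
    and Phi: "is_state_transition (\<lambda>t. companion2 0 (a - \<kappa>\<^sup>2 + \<epsilon> * p t)) Phi"
    and tr: "\<bar>trace (Phi (2 * pi))\<bar> > 2 * cosh (2 * pi * \<kappa>)"
  shows "\<exists>l. is_eigenvalue (Theta (2 * pi)) l \<and> cmod l > 1"
proof -
  define C where "C = 2 * pi * \<kappa>"
  define s where "s = trace (Phi (2 * pi))"
  have "is_state_transition (\<lambda>t. companion2 (0 + 2 * \<kappa>) (a + \<epsilon> * p t))
      (\<lambda>t. exp (- \<kappa> * t) *\<^sub>R (shear \<kappa> ** Phi t ** shear (- \<kappa>)))"
    using Phi by (intro state_transition_exp_shear) (simp add: algebra_simps)
  then have "Theta = (\<lambda>t. exp (- \<kappa> * t) *\<^sub>R (shear \<kappa> ** Phi t ** shear (- \<kappa>)))"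
    using state_transition_unique[OF Theta _ trace_companion2] by simp
  then have "Theta (2 * pi) = exp (- C) *\<^sub>R (shear \<kappa> ** Phi (2 * pi) ** shear (- \<kappa>))"
    by (simp add: C_def mult_ac)
  then have trace_Theta: "trace (Theta (2 * pi)) = exp (- C) * s"
    by (simp add: trace_scaleR trace_shear_conjugate s_def)
  have det_Theta: "det (Theta (2 * pi)) = exp (- C) ^ 2"
    using det_state_transition[OF Theta, where \<tau> = "- 2 * \<kappa>"]
    by (simp add: trace_companion2 C_def mult_ac flip: exp_of_nat_mult)
  obtain \<mu> where \<mu>: "\<mu>\<^sup>2 - s * \<mu> + 1 = 0" "exp C < \<bar>\<mu>\<bar>"
    using reciprocal_quadratic_root_abs_gt_exp tr unfolding s_def C_def by blast
  have "(exp (- C) * \<mu>)\<^sup>2 - trace (Theta (2 * pi)) * (exp (- C) * \<mu>) + det (Theta (2 * pi))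
      = exp (- C) ^ 2 * (\<mu>\<^sup>2 - s * \<mu> + 1)"
    unfolding trace_Theta det_Theta by (simp add: algebra_simps power2_eq_square)
  then have "is_eigenvalue (Theta (2 * pi)) (complex_of_real (exp (- C) * \<mu>))"
    using \<mu>(1) by (intro is_eigenvalue_of_characteristic_root) simp
  moreover have "1 < cmod (complex_of_real (exp (- C) * \<mu>))"
    using \<mu>(2) by (simp only: norm_of_real abs_mult) (simp add: exp_minus field_simps)
  ultimately show ?thesis
    by blast
qed

end
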